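(* Let $\rho$ be a 2-qubit pure state whose Bloch representation has the form $\boldsymbol{\alpha}=O_1(\mu,0,0)^T$, $\boldsymbol{\beta}=O_2(\mu,0,0)^T$, $C=O_1\,\mathrm{diag}(1,\sin\theta,-\sin\theta)\,O_2^T$, with $\theta\in[0,\pi/2]$, $\mu=\cos\theta$, $O_1,O_2\in SO(3)$, and suppose $|\mu|=1$. Then $I_{\chi^2,post}(\rho)=2$.
   Context: Let $\sigma_1,\sigma_2,\sigma_3$ be the Pauli matrices. For a 2-qubit density matrix $\rho$ its Bloch vector is $(b_1,\dots,b_{16})$, where $b_1=1$; $(b_2,b_3,b_4)=\boldsymbol{\alpha}$ with $\alpha_j=\operatorname{tr}((\sigma_j\otimes I)\rho)$; $(b_5,b_6,b_7)=\boldsymbol{\beta}$ with $\beta_j=\operatorname{tr}((I\otimes\sigma_j)\rho)$; and $(b_8,\dots,b_{16})$ are the entries $C_{jk}=\operatorname{tr}((\sigma_j\otimes\sigma_k)\rho)$ of the $3\times3$ matrix $C$ in row-major order. Every 2-qubit pure state has a Bloch representation of the displayed form. For $b\in[-1,1]$ and $h\in(-1,1)$, $D_{\chi^2}(b,h)=\frac{((b+1)/2)^2}{(h+1)/2}+\frac{((1-b)/2)^2}{(1-h)/2}-1$; if $h=\pm1$ and $b=h$, set $D_{\chi^2}(b,h)=0$. The posterior information content of a pure state with Bloch vector $(b_1,\dots,b_{16})$ is defined as follows. For $i=2,\dots,16$, let $b_i^{max}$ and $b_i^{min}$ be the maximum and the minimum of the $i$-th Bloch component over all 2-qubit pure states whose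 components $1,\dots,i-1$ equal $b_1,\dots,b_{i-1}$, and let $h_i=(b_i^{max}+b_i^{min})/2$. Then $I_{\chi^2,post}=\sum_{i=2}^{16}D_{\chi^2}(b_i,h_i)$. *)

theory Defs
  imports "HOL-Analysis.Analysis"
begin

text \<open>Complex matrices are represented as functions nat => nat => complex;
  only the entries with indices below the dimension matter.
  One-qubit matrices have indices 0,1; two-qubit matrices have indices 0..3,
  the computational basis vector |a b> having index 2*a+b.\<close>

type_synonym cmat = "nat \<Rightarrow> nat \<Rightarrow> complex"

definition pauli :: "nat \<Rightarrow> cmat" where
  "pauli k = (\<lambda>a c.
     if k = 0 then (if a = c then 1 else 0)
     else if k = 1 then (if a = c then 0 else 1)
     else if k = 2 then (if a = 0 \<and> c = 1 then - \<i> else if a = 1 \<and> c = 0 then \<i> else 0)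
     else (if a = c then (if a = 0 then 1 else -1) else 0))"

definition tensor2 :: "cmat \<Rightarrow> cmat \<Rightarrow> cmat" where
  "tensor2 A B = (\<lambda>i j. A (i div 2) (j div 2) * B (i mod 2) (j mod 2))"

definition tr_prod4 :: "cmat \<Rightarrow> cmat \<Rightarrow> complex" where
  "tr_prod4 M rho = (\<Sum>i<4. \<Sum>j<4. M i j * rho j i)"

definition pure_2qubit :: "cmat \<Rightarrow> bool" where
  "pure_2qubit rho \<longleftrightarrow> (\<exists>psi :: nat \<Rightarrow> complex.
      (\<Sum>i<4. (cmod (psi i))\<^sup>2) = 1 \<and>
      (\<forall>i<4. \<forall>j<4. rho i j = psi i * cnj (psi j)))"

text \<open>Which Pauli pair (sigma_j, sigma_k) (0 = identity) corresponds to Bloch index i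
  (1..16): 1 -> (I,I); 2..4 -> alpha; 5..7 -> beta; 8..16 -> C row-major.\<close>
definition bloch_idx :: "nat \<Rightarrow> nat \<times> nat" where
  "bloch_idx i =
     (if i = 1 then (0, 0)
      else if i \<le> 4 then (i - 1, 0)
      else if i \<le> 7 then (0, i - 4)
      else ((i - 8) div 3 + 1, (i - 8) mod 3 + 1))"

definition bloch :: "cmat \<Rightarrow> nat \<Rightarrow> real" where
  "bloch rho i = Re (tr_prod4 (tensor2 (pauli (fst (bloch_idx i))) (pauli (snd (bloch_idx i)))) rho)"

definition bloch_alpha :: "cmat \<Rightarrow> real^3" where
  "bloch_alpha rho = vector [bloch rho 2, bloch rho 3, bloch rho 4]"

definition bloch_beta :: "cmat \<Rightarrow> real^3" where
  "bloch_beta rho = vector [bloch rho 5, bloch rho 6, bloch rho 7]"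

definition bloch_C :: "cmat \<Rightarrow> real^3^3" where
  "bloch_C rho = vector [vector [bloch rho 8, bloch rho 9, bloch rho 10],
                         vector [bloch rho 11, bloch rho 12, bloch rho 13],
                         vector [bloch rho 14, bloch rho 15, bloch rho 16]]"

definition cond_range :: "cmat \<Rightarrow> nat \<Rightarrow> real set" where
  "cond_range rho i = {bloch rho' i | rho'. pure_2qubit rho' \<and>
                          (\<forall>l\<in>{1..<i}. bloch rho' l = bloch rho l)}"

definition b_max :: "cmat \<Rightarrow> nat \<Rightarrow> real" where
  "b_max rho i = Sup (cond_range rho i)"

definition b_min :: "cmat \<Rightarrow> nat \<Rightarrow> real" where
  "b_min rho i = Inf (cond_range rho i)"

definition h_mid :: "cmat \<Rightarrow> nat \<Rightarrow> real" where
  "h_mid rho i = (b_max rho i + b_min rho i) / 2"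

definition D_chi2 :: "real \<Rightarrow> real \<Rightarrow> real" where
  "D_chi2 b h =
     (if -1 < h \<and> h < 1
      then ((b + 1) / 2)\<^sup>2 / ((h + 1) / 2) + ((1 - b) / 2)\<^sup>2 / ((1 - h) / 2) - 1
      else if b = h then 0 else undefined)"

definition I_chi2_post :: "cmat \<Rightarrow> real" where
  "I_chi2_post rho = (\<Sum>i=2..16. D_chi2 (bloch rho i) (h_mid rho i))"

definition SO3 :: "(real^3^3) set" where
  "SO3 = {Q. orthogonal_matrix Q \<and> det Q = 1}"

end

theory Submission
  imports Defs
begin

text \<open>If the local Bloch vector alpha of a pure state has unit length, the defect
  1 - |alpha|^2 = 4 |psi0 psi3 - psi1 psi2|^2 vanishes, so the state is a product state and
  C = alpha beta^T. Hence each correlation component is determined by the six local ones: its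
  posterior range is a single point and it contributes D(b, b) = 0. For a local component, the
  admissible values form the symmetric interval [-R, R], where R is the norm left over by the
  earlier components of the same block, and both endpoints are realised by product states; so
  h = 0 and the contribution is D(b, 0) = b^2. Summing gives |alpha|^2 + |beta|^2 = 2.\<close>

lemma sum_lessThan_4: "(\<Sum>i<4::nat. f i) = f 0 + f 1 + f 2 + (f 3 :: 'a :: comm_monoid_add)"
  by (simp add: numeral_eq_Suc lessThan_Suc add_ac)

lemma sum_atLeastAtMost_2_4: "(\<Sum>l::nat=2..4. f l) = f 2 + f 3 + (f 4 :: 'a :: comm_monoid_add)"
  by (simp add: sum.atLeast_Suc_atMost numeral_eq_Suc add_ac)

lemma sum_atLeastAtMost_5_7: "(\<Sum>l::nat=5..7. f l) = f 5 + f 6 + (f 7 :: 'a :: comm_monoid_add)"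
  by (simp add: sum.atLeast_Suc_atMost numeral_eq_Suc add_ac)

lemma bloch_coordinates:
  fixes x y :: "nat \<Rightarrow> real"
  assumes rho: "\<forall>i<4. \<forall>j<4. rho i j = Complex (x i) (y i) * cnj (Complex (x j) (y j))"
  shows "bloch rho 1 = (x 0)\<^sup>2 + (x 1)\<^sup>2 + (x 2)\<^sup>2 + (x 3)\<^sup>2 + (y 0)\<^sup>2 + (y 1)\<^sup>2 + (y 2)\<^sup>2 + (y 3)\<^sup>2"
    and "bloch rho 2 = 2 * (x 0 * x 2 + x 1 * x 3 + y 0 * y 2 + y 1 * y 3)"
    and "bloch rho 3 = 2 * (x 0 * y 2 + x 1 * y 3 - x 2 * y 0 - x 3 * y 1)"
    and "bloch rho 4 = (x 0)\<^sup>2 + (x 1)\<^sup>2 - (x 2)\<^sup>2 - (x 3)\<^sup>2 + (y 0)\<^sup>2 + (y 1)\<^sup>2 - (y 2)\<^sup>2 - (y 3)\<^sup>2"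
    and "bloch rho 5 = 2 * (x 0 * x 1 + x 2 * x 3 + y 0 * y 1 + y 2 * y 3)"
    and "bloch rho 6 = 2 * (x 0 * y 1 - x 1 * y 0 + x 2 * y 3 - x 3 * y 2)"
    and "bloch rho 7 = (x 0)\<^sup>2 - (x 1)\<^sup>2 + (x 2)\<^sup>2 - (x 3)\<^sup>2 + (y 0)\<^sup>2 - (y 1)\<^sup>2 + (y 2)\<^sup>2 - (y 3)\<^sup>2"
    and "bloch rho 8 = 2 * (x 0 * x 3 + x 1 * x 2 + y 0 * y 3 + y 1 * y 2)"
    and "bloch rho 9 = 2 * (x 0 * y 3 - x 1 * y 2 + x 2 * y 1 - x 3 * y 0)"
    and "bloch rho 10 = 2 * (x 0 * x 2 - x 1 * x 3 + y 0 * y 2 - y 1 * y 3)"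
    and "bloch rho 11 = 2 * (x 0 * y 3 + x 1 * y 2 - x 2 * y 1 - x 3 * y 0)"
    and "bloch rho 12 = 2 * (x 1 * x 2 - x 0 * x 3 + y 1 * y 2 - y 0 * y 3)"
    and "bloch rho 13 = 2 * (x 0 * y 2 - x 1 * y 3 - x 2 * y 0 + x 3 * y 1)"
    and "bloch rho 14 = 2 * (x 0 * x 1 - x 2 * x 3 + y 0 * y 1 - y 2 * y 3)"
    and "bloch rho 15 = 2 * (x 0 * y 1 - x 1 * y 0 - x 2 * y 3 + x 3 * y 2)"
    and "bloch rho 16 = (x 0)\<^sup>2 - (x 1)\<^sup>2 - (x 2)\<^sup>2 + (x 3)\<^sup>2 + (y 0)\<^sup>2 - (y 1)\<^sup>2 - (y 2)\<^sup>2 + (y 3)\<^sup>2"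
  using rho by (simp_all add: bloch_def tr_prod4_def sum_lessThan_4 tensor2_def pauli_def bloch_idx_def
      algebra_simps power2_eq_square)

lemma pure_2qubit_coordinates:
  assumes "pure_2qubit rho"
  obtains x y :: "nat \<Rightarrow> real"
  where "\<forall>i<4. \<forall>j<4. rho i j = Complex (x i) (y i) * cnj (Complex (x j) (y j))"
    and "(\<Sum>i<4. (x i)\<^sup>2 + (y i)\<^sup>2) = 1"
proof -
  obtain psi where "(\<Sum>i<4. (cmod (psi i))\<^sup>2) = 1" "\<forall>i<4. \<forall>j<4. rho i j = psi i * cnj (psi j)"
    using assms unfolding pure_2qubit_def by blast
  then show thesis
    by (intro that[of "\<lambda>i. Re (psi i)" "\<lambda>i. Im (psi i)"]) (simp_all add: cmod_power2)
qed

lemma pure_bloch_1: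
  assumes "pure_2qubit rho"
  shows "bloch rho 1 = 1"
proof -
  obtain x y :: "nat \<Rightarrow> real"
    where rho: "\<forall>i<4. \<forall>j<4. rho i j = Complex (x i) (y i) * cnj (Complex (x j) (y j))"
      and "(\<Sum>i<4. (x i)\<^sup>2 + (y i)\<^sup>2) = 1"
    using assms by (rule pure_2qubit_coordinates)
  then show ?thesis unfolding bloch_coordinates(1)[OF rho] sum_lessThan_4 by (simp add: algebra_simps)
qed

lemma bloch_local_norm_defect:
  fixes x y :: "nat \<Rightarrow> real"
  assumes rho: "\<forall>i<4. \<forall>j<4. rho i j = Complex (x i) (y i) * cnj (Complex (x j) (y j))"
  defines "\<psi> \<equiv> \<lambda>i. Complex (x i) (y i)"
  shows "(bloch rho 1)\<^sup>2 - (\<Sum>l=2..4. (bloch rho l)\<^sup>2) = 4 * (cmod (\<psi> 0 * \<psi> 3 - \<psi> 1 * \<psi> 2))\<^sup>2"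
    and "(bloch rho 1)\<^sup>2 - (\<Sum>l=5..7. (bloch rho l)\<^sup>2) = 4 * (cmod (\<psi> 0 * \<psi> 3 - \<psi> 1 * \<psi> 2))\<^sup>2"
  unfolding sum_atLeastAtMost_2_4 sum_atLeastAtMost_5_7 cmod_power2 \<psi>_def bloch_coordinates[OF rho]
  by (simp; algebra)+

lemma pure_local_norms:
  assumes "pure_2qubit rho"
  shows "(\<Sum>l=2..4. (bloch rho l)\<^sup>2) \<le> 1"
    and "(\<Sum>l=5..7. (bloch rho l)\<^sup>2) = (\<Sum>l=2..4. (bloch rho l)\<^sup>2)"
proof -
  obtain x y :: "nat \<Rightarrow> real"
    where rho: "\<forall>i<4. \<forall>j<4. rho i j = Complex (x i) (y i) * cnj (Complex (x j) (y j))"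
    using assms by (rule pure_2qubit_coordinates)
  have "(bloch rho 1)\<^sup>2 - (\<Sum>l=2..4. (bloch rho l)\<^sup>2) \<ge> 0"
    unfolding bloch_local_norm_defect(1)[OF rho] by simp
  then show "(\<Sum>l=2..4. (bloch rho l)\<^sup>2) \<le> 1"
    using pure_bloch_1[OF assms] by simp
  show "(\<Sum>l=5..7. (bloch rho l)\<^sup>2) = (\<Sum>l=2..4. (bloch rho l)\<^sup>2)"
    using bloch_local_norm_defect[OF rho] by simp
qed

lemma bloch_correlation_factorizes:
  fixes x y :: "nat \<Rightarrow> real"
  assumes rho: "\<forall>i<4. \<forall>j<4. rho i j = Complex (x i) (y i) * cnj (Complex (x j) (y j))"
  defines "\<psi> \<equiv> \<lambda>i. Complex (x i) (y i)"
  assumes det: "\<psi> 0 * \<psi> 3 = \<psi> 1 * \<psi> 2" and "j < 3" "k < 3"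
  shows "bloch rho 1 * bloch rho (8 + 3 * j + k) = bloch rho (2 + j) * bloch rho (5 + k)"
proof -
  have re: "x 0 * x 3 - y 0 * y 3 = x 1 * x 2 - y 1 * y 2"
    and im: "x 0 * y 3 + y 0 * x 3 = x 1 * y 2 + y 1 * x 2"
    using det by (simp_all add: \<psi>_def complex_eq_iff)
  have "bloch rho 1 * bloch rho 8 = bloch rho 2 * bloch rho 5"
    "bloch rho 1 * bloch rho 9 = bloch rho 2 * bloch rho 6"
    "bloch rho 1 * bloch rho 10 = bloch rho 2 * bloch rho 7"
    "bloch rho 1 * bloch rho 11 = bloch rho 3 * bloch rho 5"
    "bloch rho 1 * bloch rho 12 = bloch rho 3 * bloch rho 6"
    "bloch rho 1 * bloch rho 13 = bloch rho 3 * bloch rho 7"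
    "bloch rho 1 * bloch rho 14 = bloch rho 4 * bloch rho 5"
    "bloch rho 1 * bloch rho 15 = bloch rho 4 * bloch rho 6"
    "bloch rho 1 * bloch rho 16 = bloch rho 4 * bloch rho 7"
    using re im unfolding bloch_coordinates[OF rho] by (algebra)+
  moreover have "j = 0 \<or> j = 1 \<or> j = 2" "k = 0 \<or> k = 1 \<or> k = 2" using assms(4,5) by auto
  ultimately show ?thesis by (elim disjE) simp_all
qed

lemma pure_correlation_factorizes:
  assumes "pure_2qubit rho" "(\<Sum>l=2..4. (bloch rho l)\<^sup>2) = 1" "j < 3" "k < 3"
  shows "bloch rho (8 + 3 * j + k) = bloch rho (2 + j) * bloch rho (5 + k)"
proof -
  obtain x y :: "nat \<Rightarrow> real"
    where rho: "\<forall>i<4. \<forall>j<4. rho i j = Complex (x i) (y i) * cnj (Complex (x j) (y j))"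
    using assms(1) by (rule pure_2qubit_coordinates)
  have "cmod (Complex (x 0) (y 0) * Complex (x 3) (y 3) - Complex (x 1) (y 1) * Complex (x 2) (y 2)) = 0"
    using bloch_local_norm_defect(1)[OF rho] pure_bloch_1[OF assms(1)] assms(2) by simp
  then show ?thesis
    using bloch_correlation_factorizes[OF rho _ assms(3,4)] pure_bloch_1[OF assms(1)] by simp
qed

text \<open>Every point of the Bloch sphere is the Bloch vector of a qubit (a, c + i d) with a real.\<close>
lemma unit_vector_real_spinor:
  fixes n1 n2 n3 :: real
  assumes "n1\<^sup>2 + n2\<^sup>2 + n3\<^sup>2 = 1"
  obtains a c d where "a\<^sup>2 + c\<^sup>2 + d\<^sup>2 = 1" "2 * a * c = n1" "2 * a * d = n2" "a\<^sup>2 - c\<^sup>2 - d\<^sup>2 = n3"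
proof (cases "n3 = -1")
  case True
  with assms have "n1 = 0" "n2 = 0" by simp_all
  with True show thesis by (intro that[of 0 1 0]) simp_all
next
  case False
  have "n3\<^sup>2 \<le> 1" using assms zero_le_power2[of n1] zero_le_power2[of n2] by linarith
  then have "\<bar>n3\<bar> \<le> 1" by (simp add: abs_square_le_1)
  with False have pos: "1 + n3 > 0" by linarith
  define a where "a = sqrt ((1 + n3) / 2)"
  have a2: "a\<^sup>2 = (1 + n3) / 2" and "a \<noteq> 0" using pos by (simp_all add: a_def)
  have "n1\<^sup>2 + n2\<^sup>2 = (1 - n3) * (1 + n3)" using assms by (simp add: algebra_simps power2_eq_square)
  then have "(n1 / (2 * a))\<^sup>2 + (n2 / (2 * a))\<^sup>2 = (1 - n3) / 2"
    using a2 pos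
    by (simp add: power_divide power_mult_distrib add_divide_distrib[symmetric] mult.commute[of 2])
  with a2 \<open>a \<noteq> 0\<close> show thesis
    by (intro that[of a "n1 / (2 * a)" "n2 / (2 * a)"]) simp_all
qed

lemma product_state_exists:
  fixes v :: "nat \<Rightarrow> real"
  assumes "(\<Sum>l=2..4. (v l)\<^sup>2) = 1" "(\<Sum>l=5..7. (v l)\<^sup>2) = 1"
  obtains r where "pure_2qubit r" "\<forall>l\<in>{2..7}. bloch r l = v l"
proof -
  obtain a c d where u: "a\<^sup>2 + c\<^sup>2 + d\<^sup>2 = 1" "2 * a * c = v 2" "2 * a * d = v 3" "a\<^sup>2 - c\<^sup>2 - d\<^sup>2 = v 4"
    using unit_vector_real_spinor assms(1) unfolding sum_atLeastAtMost_2_4 by blast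
  obtain a' c' d' where u': "a'\<^sup>2 + c'\<^sup>2 + d'\<^sup>2 = 1" "2 * a' * c' = v 5" "2 * a' * d' = v 6" "a'\<^sup>2 - c'\<^sup>2 - d'\<^sup>2 = v 7"
    using unit_vector_real_spinor assms(2) unfolding sum_atLeastAtMost_5_7 by blast
  \<comment> \<open>The tensor product of the spinors (a, c + i d) and (a', c' + i d').\<close>
  define x where "x k = (if k = 0 then a * a' else if k = 1 then a * c'
    else if k = 2 then c * a' else c * c' - d * d')" for k :: nat
  define y where "y k = (if k = 0 then 0 else if k = 1 then a * d'
    else if k = 2 then d * a' else c * d' + d * c')" for k :: nat
  define r where "r i j = Complex (x i) (y i) * cnj (Complex (x j) (y j))" for i j
  have rho: "\<forall>i<4. \<forall>j<4. r i j = Complex (x i) (y i) * cnj (Complex (x j) (y j))" by (simp add: r_def)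
  have "(\<Sum>i<4. (cmod (Complex (x i) (y i)))\<^sup>2) = (a\<^sup>2 + c\<^sup>2 + d\<^sup>2) * (a'\<^sup>2 + c'\<^sup>2 + d'\<^sup>2)"
    unfolding sum_lessThan_4 cmod_power2 by (simp add: x_def y_def; algebra)
  then have "pure_2qubit r" unfolding pure_2qubit_def using rho u'(1) u(1) by auto
  moreover have "bloch r 2 = 2 * a * c * (a'\<^sup>2 + c'\<^sup>2 + d'\<^sup>2)"
    "bloch r 3 = 2 * a * d * (a'\<^sup>2 + c'\<^sup>2 + d'\<^sup>2)"
    "bloch r 4 = (a\<^sup>2 - c\<^sup>2 - d\<^sup>2) * (a'\<^sup>2 + c'\<^sup>2 + d'\<^sup>2)"
    "bloch r 5 = (a\<^sup>2 + c\<^sup>2 + d\<^sup>2) * (2 * a' * c')"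
    "bloch r 6 = (a\<^sup>2 + c\<^sup>2 + d\<^sup>2) * (2 * a' * d')"
    "bloch r 7 = (a\<^sup>2 + c\<^sup>2 + d\<^sup>2) * (a'\<^sup>2 - c'\<^sup>2 - d'\<^sup>2)"
    unfolding bloch_coordinates[OF rho] by (simp add: x_def y_def; algebra)+
  then have "\<forall>l\<in>{2..7}. bloch r l = v l"
    using u u' by (auto simp: numeral_eq_Suc le_Suc_eq)
  ultimately show thesis using that by blast
qed

lemma cond_range_memI:
  "pure_2qubit r \<Longrightarrow> \<forall>l\<in>{1..<i}. bloch r l = bloch rho l \<Longrightarrow> bloch r i \<in> cond_range rho i"
  unfolding cond_range_def by blast

lemma cond_range_product_witness:
  fixes v :: "nat \<Rightarrow> real"
  assumes "pure_2qubit rho" "2 \<le> i" "i \<le> 7"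
    and "(\<Sum>l=2..4. (v l)\<^sup>2) = 1" "(\<Sum>l=5..7. (v l)\<^sup>2) = 1"
    and "\<forall>l\<in>{2..<i}. v l = bloch rho l"
  shows "v i \<in> cond_range rho i"
proof -
  obtain r where r: "pure_2qubit r" "\<forall>l\<in>{2..7}. bloch r l = v l"
    using product_state_exists assms(4,5) by blast
  have "bloch r l = bloch rho l" if "l \<in> {1..<i}" for l
  proof (cases "l = 1")
    case True
    then show ?thesis using pure_bloch_1 r(1) assms(1) by simp
  next
    case False
    then show ?thesis using that r(2) assms(3,6) by auto
  qed
  moreover have "bloch r i = v i" using r(2) assms(2,3) by simp
  ultimately show ?thesis using cond_range_memI[OF r(1)] by metis
qed

lemma cond_range_local_bound:
  assumes "x \<in> cond_range rho i" "m = 2 \<or> m = 5" "m \<le> i" "i \<le> m + 2"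
  shows "(\<Sum>l\<in>{m..<i}. (bloch rho l)\<^sup>2) + x\<^sup>2 \<le> 1"
proof -
  obtain r where r: "pure_2qubit r" "\<forall>l\<in>{1..<i}. bloch r l = bloch rho l" "x = bloch r i"
    using assms(1) unfolding cond_range_def by blast
  have "(\<Sum>l\<in>{m..<i}. (bloch rho l)\<^sup>2) = (\<Sum>l\<in>{m..<i}. (bloch r l)\<^sup>2)"
    using r(2) assms(2) by (intro sum.cong) auto
  then have "(\<Sum>l\<in>{m..<i}. (bloch rho l)\<^sup>2) + x\<^sup>2 = (\<Sum>l=m..i. (bloch r l)\<^sup>2)"
    using r(3) assms(3) by (simp add: sum.atLeastLessThan_Suc flip: atLeastLessThanSuc_atLeastAtMost)
  also have "\<dots> \<le> (\<Sum>l=m..m+2. (bloch r l)\<^sup>2)"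
    using assms(4) by (intro sum_mono2) auto
  also have "\<dots> \<le> 1"
    using pure_local_norms[OF r(1)] assms(2)
    by (elim disjE) (simp_all add: sum_atLeastAtMost_2_4 sum_atLeastAtMost_5_7)
  finally show ?thesis .
qed

lemma cond_range_correlation:
  assumes pure: "pure_2qubit rho" and unit: "(\<Sum>l=2..4. (bloch rho l)\<^sup>2) = 1"
    and i: "8 \<le> i" "i \<le> 16"
  shows "cond_range rho i = {bloch rho i}"
proof -
  define j where "j = (i - 8) div 3"
  define k where "k = (i - 8) mod 3"
  have jk: "j < 3" "k < 3" "i = 8 + 3 * j + k" using i by (auto simp: j_def k_def)
  have "x = bloch rho i" if x: "x \<in> cond_range rho i" for x
  proof -
    obtain r where r: "pure_2qubit r" "\<forall>l\<in>{1..<i}. bloch r l = bloch rho l" "x = bloch r i"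
      using x unfolding cond_range_def by blast
    have agree: "bloch r l = bloch rho l" if "2 \<le> l" "l \<le> 7" for l using r(2) that i by auto
    then have "(\<Sum>l=2..4. (bloch r l)\<^sup>2) = 1" using unit by simp
    then show ?thesis
      using r(3) jk agree pure_correlation_factorizes[OF r(1)] pure_correlation_factorizes[OF pure unit]
      by simp
  qed
  moreover have "bloch rho i \<in> cond_range rho i" by (rule cond_range_memI[OF pure]) simp
  ultimately show ?thesis by blast
qed

lemma h_mid_eq_0I:
  assumes "\<And>x. x \<in> cond_range rho i \<Longrightarrow> x\<^sup>2 \<le> R\<^sup>2"
    and "R \<in> cond_range rho i" "- R \<in> cond_range rho i"
  shows "h_mid rho i = 0"
proof -
  have bounded: "- \<bar>R\<bar> \<le> x \<and> x \<le> \<bar>R\<bar>" if "x \<in> cond_range rho i" for x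
    using assms(1)[OF that] by (metis abs_le_iff abs_le_square_iff minus_le_iff)
  have "\<bar>R\<bar> \<in> cond_range rho i" "- \<bar>R\<bar> \<in> cond_range rho i"
    using assms(2,3) by (cases "R \<ge> 0"; simp)+
  then have "b_max rho i = \<bar>R\<bar>" "b_min rho i = - \<bar>R\<bar>"
    unfolding b_max_def b_min_def using bounded
    by (auto intro!: cSup_eq_maximum cInf_eq_minimum)
  then show ?thesis by (simp add: h_mid_def)
qed

lemma h_mid_local_eq_0:
  assumes pure: "pure_2qubit rho" and unit: "(\<Sum>l=2..4. (bloch rho l)\<^sup>2) = 1"
    and i: "2 \<le> i" "i \<le> 7"
  shows "h_mid rho i = 0"
proof -
  define m where "m = (if i \<le> 4 then 2 else 5 :: nat)"
  have m: "m = 2 \<or> m = 5" "m \<le> i" "i \<le> m + 2" using i by (auto simp: m_def)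
  define P where "P = (\<Sum>l\<in>{m..<i}. (bloch rho l)\<^sup>2)"
  have bound: "P + x\<^sup>2 \<le> 1" if "x \<in> cond_range rho i" for x
    using cond_range_local_bound[OF that m] unfolding P_def .
  have "bloch rho i \<in> cond_range rho i" by (rule cond_range_memI[OF pure]) simp
  then have "P \<le> 1" using bound[of "bloch rho i"] zero_le_power2[of "bloch rho i"] by linarith
  define R where "R = sqrt (1 - P)"
  have R2: "R\<^sup>2 = 1 - P" using \<open>P \<le> 1\<close> by (simp add: R_def)
  have witness: "t \<in> cond_range rho i" if t: "t\<^sup>2 = 1 - P" for t
  proof -
    \<comment> \<open>The 1 at position 5 completes the beta block when i lies in the alpha block.\<close>
    define v where "v l = (if l < i then bloch rho l else if l = i then t else if l = 5 then 1 else 0)"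
      for l
    have "i = 2 \<or> i = 3 \<or> i = 4 \<or> i = 5 \<or> i = 6 \<or> i = 7" using i by auto
    then have "(\<Sum>l=2..4. (v l)\<^sup>2) = 1 \<and> (\<Sum>l=5..7. (v l)\<^sup>2) = 1"
      using t unit unfolding sum_atLeastAtMost_2_4 sum_atLeastAtMost_5_7 P_def m_def v_def
      by (elim disjE) (simp_all add: numeral_eq_Suc atLeastLessThanSuc algebra_simps)
    then show ?thesis
      using cond_range_product_witness[OF pure i, of v] by (simp add: v_def)
  qed
  show ?thesis
  proof (rule h_mid_eq_0I[of rho i R])
    show "x\<^sup>2 \<le> R\<^sup>2" if "x \<in> cond_range rho i" for x using bound[OF that] R2 by simp
    show "R \<in> cond_range rho i" "- R \<in> cond_range rho i" using witness R2 by simp_all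
  qed
qed

lemma D_chi2_0: "D_chi2 b 0 = b\<^sup>2"
  unfolding D_chi2_def by (simp add: field_simps power2_eq_square)

lemma D_chi2_self: "D_chi2 b b = 0"
proof (cases "-1 < b \<and> b < 1")
  case True
  then have "b + 1 \<noteq> 0" "1 - b \<noteq> 0" "b * b \<noteq> 1"
    using abs_square_less_1[of b] by (auto simp: power2_eq_square)
  with True show ?thesis unfolding D_chi2_def by (simp add: field_simps power2_eq_square)
qed (auto simp: D_chi2_def)

theorem I_chi2_post_product_state:
  assumes pure: "pure_2qubit rho" and unit: "(\<Sum>l=2..4. (bloch rho l)\<^sup>2) = 1"
  shows "I_chi2_post rho = 2"
proof -
  have local: "D_chi2 (bloch rho i) (h_mid rho i) = (bloch rho i)\<^sup>2" if "i \<in> {2..7}" for i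
    using h_mid_local_eq_0[OF pure unit] that by (simp add: D_chi2_0)
  have correlation: "D_chi2 (bloch rho i) (h_mid rho i) = 0" if "i \<in> {8..16}" for i
    using cond_range_correlation[OF pure unit] that
    by (simp add: h_mid_def b_max_def b_min_def D_chi2_self)
  have "I_chi2_post rho
      = (\<Sum>i=2..7. D_chi2 (bloch rho i) (h_mid rho i)) + (\<Sum>i=8..16. D_chi2 (bloch rho i) (h_mid rho i))"
    unfolding I_chi2_post_def using sum.ub_add_nat[of 2 7 _ 9] by simp
  also have "\<dots> = (\<Sum>i=2..7. (bloch rho i)\<^sup>2)"
    using local correlation by simp
  also have "\<dots> = (\<Sum>l=2..4. (bloch rho l)\<^sup>2) + (\<Sum>l=5..7. (bloch rho l)\<^sup>2)"
    using sum.ub_add_nat[of 2 4 _ 3] by simp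
  also have "\<dots> = 2" using unit pure_local_norms(2)[OF pure] by simp
  finally show ?thesis .
qed

lemma bloch_alpha_norm: "(norm (bloch_alpha rho))\<^sup>2 = (\<Sum>l=2..4. (bloch rho l)\<^sup>2)"
  unfolding power2_norm_eq_inner
  by (simp add: inner_vec_def sum_3 bloch_alpha_def sum_atLeastAtMost_2_4 power2_eq_square)

lemma orthogonal_matrix_norm:
  fixes Q :: "real^'n^'n"
  assumes "orthogonal_matrix Q"
  shows "norm (Q *v x) = norm x"
  using assms orthogonal_transformation_matrix[of "(*v) Q"] orthogonal_transformation_norm
  by simp

theorem lemma4:
  fixes rho :: cmat and O1 O2 :: "real^3^3" and \<theta> \<mu> :: real
  assumes "pure_2qubit rho"
    and "O1 \<in> SO3" and "O2 \<in> SO3"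
    and "0 \<le> \<theta>" and "\<theta> \<le> pi / 2"
    and "\<mu> = cos \<theta>"
    and "bloch_alpha rho = O1 *v vector [\<mu>, 0, 0]"
    and "bloch_beta rho = O2 *v vector [\<mu>, 0, 0]"
    and "bloch_C rho = O1 ** vector [vector [1, 0, 0], vector [0, sin \<theta>, 0], vector [0, 0, - sin \<theta>]] ** transpose O2"
    and "\<bar>\<mu>\<bar> = 1"
  shows "I_chi2_post rho = 2"
proof (rule I_chi2_post_product_state)
  show "pure_2qubit rho" by fact
  have "orthogonal_matrix O1" using assms(2) by (simp add: SO3_def)
  then have "norm (bloch_alpha rho) = norm (vector [\<mu>, 0, 0] :: real^3)"
    using assms(7) orthogonal_matrix_norm by metis
  also have "\<dots> = 1"
    using assms(10) by (simp add: norm_eq_sqrt_inner inner_vec_def sum_3)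
  finally show "(\<Sum>l=2..4. (bloch rho l)\<^sup>2) = 1" by (metis bloch_alpha_norm power_one)
qed

end
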